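(* For every sequence $(h_n)_{n\in\mathbb{N}}$ monotonically decreasing to zero satisfying Assumption (A) of the context, there exists a subsequence, still denoted $(h_n)_{n\in\mathbb{N}}$, such that for each $m\in L^2(\Omega;\mathbb{R}^3)$ there exists $(\vartheta_n(m))_{n\in\mathbb{N}}\subset W^{1,2}(\Omega;\mathbb{R}^3)$ satisfying (a) $(\vartheta_{n,1}(m),h_n\vartheta_{n,2}(m),h_n\vartheta_{n,3}(m))\to0$ and $\int_\omega x_3\vartheta_{n,2}(m)\,dx_2dx_3\to0$ strongly in $L^2$; (b) $K(m,[0,L])=\lim_{n\to\infty}\int_\Omega Q^{h_n}(x,\iota(m)+\nabla_{h_n}\vartheta_n(m))\,dx$.
   Context: $L>0$; $\omega\subset\mathbb{R}^2$ bounded open connected with Lipschitz boundary, $\int_\omega x_2=\int_\omega x_3=\int_\omega x_2x_3=0$; $\Omega=[0,L]\times\omega$. $\nabla_h u=(\partial_1u\,|\,\tfrac1h\partial_2u\,|\,\tfrac1h\partial_3u)$; $\iota(m)=\sum_{i=1}^3m_ie_i\otimes e_1$. Material: for $0<\eta_1\le\eta_2$, $\rho>0$, $\mathcal W(\eta_1,\eta_2,\rho)$ is the class of measurable $W:\mathbb{M}^3\to[0,+\infty]$ with $W(RF)=W(F)$ ($R\in SO(3)$), $W(F)\ge\eta_1\mathrm{dist}^2(F,SO(3))$, $W(F)\le\eta_2\mathrm{dist}^2(F,SO(3))$ when $\mathrm{dist}^2(F,SO(3))\le\rho$, $W(I)=0$, $W(I+G)=Q(G)+o(|G|^2)$ with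 $Q$ quadratic. $(W^h)_{h>0}$, $W^h:\Omega\times\mathbb{M}^3\to[0,+\infty]$, is an admissible composite material: each $W^h$ a.e. equal to a Borel function, $W^h(x,\cdot)\in\mathcal W(\eta_1,\eta_2,\rho)$ for all $h$ and a.e. $x$, and for a monotone $r$ with $r(\delta)\to0$, $\limsup_{h\to0}|W^h(x,I+G)-Q^h(x,G)|\le r(|G|)|G|^2$ for a.e. $x$ and all $G$, where $Q^h(x,G)=\lim_{\varepsilon\to0}\varepsilon^{-2}W^h(x,I+\varepsilon G)$. For open $O\subset[0,L]$, $m\in L^2(\Omega;\mathbb{R}^3)$ and $(h_n)$ decreasing to $0$: $K^-_{(h_n)}(m,O)$ (resp. $K^+_{(h_n)}(m,O)$) is the infimum of $\liminf_n$ (resp. $\limsup_n$) of $\int_{O\times\omega}Q^{h_n}(x,\iota(m)+\nabla_{h_n}\psi^{h_n})dx$ over all sequences $\psi^{h_n}\in W^{1,2}(O\times\omega;\mathbb{R}^3)$ with $(\psi^{h_n}_1,h_n\psi^{h_n}_2,h_n\psi^{h_n}_3)\to0$ strongly in $L^2(O\times\omega)$ and $\int_\omega x_3\psi^{h_n}_2\to0$ strongly in $L^2(O)$. $\mathcal D$ is a fixed countable family of open subsets of $[0,L]$, each a finite union of open intervals, dense in the open subsets of $[0,L]$ (for open $A,B$ with $\bar A$ compact in $B$ there is $D\in\mathcal D$ with $\bar A\subset D$, $\bar D\subset B$). Assumption (A) on $(h_n)$: $K^+_{(h_n)}(m,D)=K^-_{(h_n)}(m,D)$ for all $m\in L^2(\Omega;\mathbb{R}^3)$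 and all $D\in\mathcal D$. Under (A) one has $K^+_{(h_n)}(m,O)=K^-_{(h_n)}(m,O)=:K(m,O)$ for every open $O\subset[0,L]$. *)

theory Defs
  imports "HOL-Analysis.Analysis"
begin

definition pt3 :: "real \<Rightarrow> real^2 \<Rightarrow> real^3" where
  "pt3 t y = vector [t, y $ 1, y $ 2]"

definition xsec :: "real^3 \<Rightarrow> real^2" where
  "xsec x = vector [x $ 2, x $ 3]"

definition cyl :: "real set \<Rightarrow> (real^2) set \<Rightarrow> (real^3) set" where
  "cyl S \<omega> = {x. x $ 1 \<in> S \<and> xsec x \<in> \<omega>}"

definition lipschitz_boundary :: "(real^2) set \<Rightarrow> bool" where
  "lipschitz_boundary U \<longleftrightarrow>
     (\<forall>p\<in>frontier U. \<exists>r>0. \<exists>R::real^2^2. \<exists>\<gamma>::real\<Rightarrow>real. \<exists>C.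
        rotation_matrix R \<and> C-lipschitz_on UNIV \<gamma> \<and>
        U \<inter> ball p r = {y\<in>ball p r. (R *v (y - p)) $ 2 > \<gamma> ((R *v (y - p)) $ 1)})"

definition SO3 :: "(real^3^3) set" where
  "SO3 = {R. rotation_matrix R}"

definition quadratic_form :: "(real^3^3 \<Rightarrow> real) \<Rightarrow> bool" where
  "quadratic_form Q \<longleftrightarrow> (\<exists>B. bilinear B \<and> (\<forall>G. Q G = B G G))"

definition matclass :: "real \<Rightarrow> real \<Rightarrow> real \<Rightarrow> (real^3^3 \<Rightarrow> ennreal) \<Rightarrow> bool" where
  "matclass \<eta>1 \<eta>2 \<rho> W \<longleftrightarrow>
     W \<in> borel_measurable borel \<and>
     (\<forall>R F. R \<in> SO3 \<longrightarrow> W (R ** F) = W F) \<and>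
     (\<forall>F. W F \<ge> ennreal (\<eta>1 * (infdist F SO3)\<^sup>2)) \<and>
     (\<forall>F. (infdist F SO3)\<^sup>2 \<le> \<rho> \<longrightarrow> W F \<le> ennreal (\<eta>2 * (infdist F SO3)\<^sup>2)) \<and>
     W (mat 1) = 0 \<and>
     (\<exists>Q. quadratic_form Q \<and>
        (\<forall>e>0. \<exists>d>0. \<forall>G. norm G < d \<longrightarrow>
            W (mat 1 + G) < \<infinity> \<and> \<bar>enn2real (W (mat 1 + G)) - Q G\<bar> \<le> e * (norm G)\<^sup>2))"

definition Qh :: "(real \<Rightarrow> real^3 \<Rightarrow> real^3^3 \<Rightarrow> ennreal) \<Rightarrow> real \<Rightarrow> real^3 \<Rightarrow> real^3^3 \<Rightarrow> real" where
  "Qh W h x G = Lim (at (0::real)) (\<lambda>\<epsilon>. enn2real (W h x (mat 1 + \<epsilon> *\<^sub>R G)) / \<epsilon>\<^sup>2)"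

definition admissible_material ::
  "real \<Rightarrow> real \<Rightarrow> real \<Rightarrow> (real^3) set \<Rightarrow> (real \<Rightarrow> real^3 \<Rightarrow> real^3^3 \<Rightarrow> ennreal) \<Rightarrow> bool" where
  "admissible_material \<eta>1 \<eta>2 \<rho> \<Omega> W \<longleftrightarrow>
     (\<forall>h>0. \<exists>g :: (real^3) \<times> (real^3^3) \<Rightarrow> ennreal. g \<in> borel_measurable borel \<and>
        (AE p in lborel. p \<in> \<Omega> \<times> UNIV \<longrightarrow> W h (fst p) (snd p) = g p)) \<and>
     (\<forall>h>0. AE x in lebesgue. x \<in> \<Omega> \<longrightarrow> matclass \<eta>1 \<eta>2 \<rho> (W h x)) \<and>
     (\<exists>r::real \<Rightarrow> real. mono_on {0..} r \<and> (r \<longlongrightarrow> 0) (at_right 0) \<and>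
        (AE x in lebesgue. x \<in> \<Omega> \<longrightarrow>
           (\<forall>G. Limsup (at_right 0)
                   (\<lambda>h. \<bar>enn2ereal (W h x (mat 1 + G)) - ereal (Qh W h x G)\<bar>)
                 \<le> ereal (r (norm G) * (norm G)\<^sup>2))))"

definition L2 :: "(real^3) set \<Rightarrow> (real^3 \<Rightarrow> 'b::real_normed_vector) \<Rightarrow> bool" where
  "L2 U f \<longleftrightarrow> f \<in> borel_measurable (lebesgue_on U) \<and>
               integrable (lebesgue_on U) (\<lambda>x. (norm (f x))\<^sup>2)"

definition pdiff :: "3 \<Rightarrow> (real^3 \<Rightarrow> real) \<Rightarrow> real^3 \<Rightarrow> real" where
  "pdiff j f x = deriv (\<lambda>t. f (x + t *\<^sub>R axis j 1)) 0"

fun iter_pdiff :: "3 list \<Rightarrow> (real^3 \<Rightarrow> real) \<Rightarrow> real^3 \<Rightarrow> real" where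
  "iter_pdiff [] f = f"
| "iter_pdiff (j # js) f = pdiff j (iter_pdiff js f)"

definition smooth3 :: "(real^3 \<Rightarrow> real) \<Rightarrow> bool" where
  "smooth3 f \<longleftrightarrow> (\<forall>js. continuous_on UNIV (iter_pdiff js f) \<and>
      (\<forall>j x. (\<lambda>t. iter_pdiff js f (x + t *\<^sub>R axis j 1)) differentiable (at 0)))"

definition test_fun :: "(real^3) set \<Rightarrow> (real^3 \<Rightarrow> real) \<Rightarrow> bool" where
  "test_fun U \<phi> \<longleftrightarrow> smooth3 \<phi> \<and> compact (closure {x. \<phi> x \<noteq> 0}) \<and>
                      closure {x. \<phi> x \<noteq> 0} \<subseteq> U"

text \<open>u belongs to W^{1,2}(U;R^3) with weak Jacobian Du (Du x $ i $ j = d_j u_i);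
  derivatives are taken in the interior of U.\<close>
definition W12 :: "(real^3) set \<Rightarrow> (real^3 \<Rightarrow> real^3) \<Rightarrow> (real^3 \<Rightarrow> real^3^3) \<Rightarrow> bool" where
  "W12 U u Du \<longleftrightarrow> L2 U u \<and> L2 U Du \<and>
     (\<forall>\<phi>. test_fun (interior U) \<phi> \<longrightarrow> (\<forall>i j.
        integral\<^sup>L (lebesgue_on U) (\<lambda>x. u x $ i * pdiff j \<phi> x) =
        - integral\<^sup>L (lebesgue_on U) (\<lambda>x. Du x $ i $ j * \<phi> x)))"

definition grad_h :: "real \<Rightarrow> real^3^3 \<Rightarrow> real^3^3" where
  "grad_h h D = (\<chi> i j. if j = 1 then D $ i $ j else D $ i $ j / h)"

definition iota :: "real^3 \<Rightarrow> real^3^3" where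
  "iota m = (\<chi> i j. if j = 1 then m $ i else 0)"

definition scale23 :: "real \<Rightarrow> real^3 \<Rightarrow> real^3" where
  "scale23 h v = vector [v $ 1, h * v $ 2, h * v $ 3]"

definition adm_seq :: "(real^2) set \<Rightarrow> real set \<Rightarrow> (nat \<Rightarrow> real)
      \<Rightarrow> (nat \<Rightarrow> real^3 \<Rightarrow> real^3) \<Rightarrow> (nat \<Rightarrow> real^3 \<Rightarrow> real^3^3) \<Rightarrow> bool" where
  "adm_seq \<omega> S h \<psi> D\<psi> \<longleftrightarrow>
     (\<forall>n. W12 (cyl S \<omega>) (\<psi> n) (D\<psi> n)) \<and>
     ((\<lambda>n. \<integral>\<^sup>+ x \<in> cyl S \<omega>. ennreal ((norm (scale23 (h n) (\<psi> n x)))\<^sup>2) \<partial>lebesgue)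
        \<longlonglongrightarrow> 0) \<and>
     ((\<lambda>n. \<integral>\<^sup>+ t \<in> S. ennreal ((integral\<^sup>L (lebesgue_on \<omega>) (\<lambda>y. y $ 2 * \<psi> n (pt3 t y) $ 2))\<^sup>2) \<partial>lebesgue)
        \<longlonglongrightarrow> 0)"

definition energy :: "(real \<Rightarrow> real^3 \<Rightarrow> real^3^3 \<Rightarrow> ennreal) \<Rightarrow> (real^2) set \<Rightarrow> real set
      \<Rightarrow> real \<Rightarrow> (real^3 \<Rightarrow> real^3) \<Rightarrow> (real^3 \<Rightarrow> real^3^3) \<Rightarrow> ennreal" where
  "energy W \<omega> S h m D\<psi> =
     (\<integral>\<^sup>+ x \<in> cyl S \<omega>. ennreal (Qh W h x (iota (m x) + grad_h h (D\<psi> x))) \<partial>lebesgue)"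

definition Kminus :: "(real \<Rightarrow> real^3 \<Rightarrow> real^3^3 \<Rightarrow> ennreal) \<Rightarrow> (real^2) set
      \<Rightarrow> (nat \<Rightarrow> real) \<Rightarrow> (real^3 \<Rightarrow> real^3) \<Rightarrow> real set \<Rightarrow> ennreal" where
  "Kminus W \<omega> h m S = (INF p \<in> {(\<psi>, D\<psi>). adm_seq \<omega> S h \<psi> D\<psi>}.
       liminf (\<lambda>n. energy W \<omega> S (h n) m (snd p n)))"

definition Kplus :: "(real \<Rightarrow> real^3 \<Rightarrow> real^3^3 \<Rightarrow> ennreal) \<Rightarrow> (real^2) set
      \<Rightarrow> (nat \<Rightarrow> real) \<Rightarrow> (real^3 \<Rightarrow> real^3) \<Rightarrow> real set \<Rightarrow> ennreal" where
  "Kplus W \<omega> h m S = (INF p \<in> {(\<psi>, D\<psi>). adm_seq \<omega> S h \<psi> D\<psi>}.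
       limsup (\<lambda>n. energy W \<omega> S (h n) m (snd p n)))"

definition dense_family :: "real \<Rightarrow> real set set \<Rightarrow> bool" where
  "dense_family L \<D> \<longleftrightarrow> countable \<D> \<and>
     (\<forall>D\<in>\<D>. openin (top_of_set {0..L}) D \<and>
        (\<exists>I. finite I \<and> D = (\<Union>(a,b)\<in>I. {a<..<b}) \<inter> {0..L})) \<and>
     (\<forall>A B. openin (top_of_set {0..L}) A \<longrightarrow> openin (top_of_set {0..L}) B \<longrightarrow>
        compact (closure A) \<longrightarrow> closure A \<subseteq> B \<longrightarrow>
        (\<exists>D\<in>\<D>. closure A \<subseteq> D \<and> closure D \<subseteq> B))"

end

theory Submission
  imports Defs
begin

text \<open>Since every admissible sequence has liminf energy at least K(m,[0,L]), a sequence whose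
  limsup energy is at most K(m,[0,L]) converges to it. By (A), for each k some admissible
  sequence has limsup energy below K(m,[0,L]) + 1/(k+1); running along such sequences with an
  index k = \<kappa>(n) that grows slowly enough that all the k-th smallness conditions already hold at
  step n yields an admissible diagonal sequence with limsup energy at most K(m,[0,L]). No
  passage to a subsequence is needed.\<close>

lemma eventually_diagonal_index:
  assumes "\<And>k. eventually (\<lambda>n. Q k n) sequentially"
  obtains \<kappa> :: "nat \<Rightarrow> nat"
    where "filterlim \<kappa> at_top sequentially" "eventually (\<lambda>n. Q (\<kappa> n) n) sequentially"
proof -
  obtain N where N: "\<And>k n. N k \<le> n \<Longrightarrow> Q k n"
    using assms unfolding eventually_sequentially by metis
  define M where "M k = Max (N ` {..k})" for k
  have N_le_M: "N k \<le> M k" for k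
    unfolding M_def by (intro Max_ge) auto
  \<comment> \<open>\<kappa> n is the largest k \<le> n for which the conditions Q 0, ..., Q k all hold from step n on.\<close>
  define \<kappa> where "\<kappa> n = Max ({k. k \<le> n \<and> M k \<le> n} \<union> {0})" for n
  have finite: "finite ({k. k \<le> n \<and> M k \<le> n} \<union> {0})" for n
    by auto
  have "eventually (\<lambda>n. j \<le> \<kappa> n) sequentially" for j
    unfolding eventually_sequentially
  proof (intro exI allI impI)
    fix n assume "max j (M j) \<le> n"
    then show "j \<le> \<kappa> n"
      unfolding \<kappa>_def using finite by (intro Max_ge) auto
  qed
  then have "filterlim \<kappa> at_top sequentially"
    by (simp add: filterlim_at_top)
  moreover have "eventually (\<lambda>n. Q (\<kappa> n) n) sequentially"
    unfolding eventually_sequentially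
  proof (intro exI allI impI)
    fix n assume n: "M 0 \<le> n"
    have "\<kappa> n \<in> {k. k \<le> n \<and> M k \<le> n} \<union> {0}"
      unfolding \<kappa>_def using finite by (intro Max_in) auto
    with n have "M (\<kappa> n) \<le> n" by auto
    then show "Q (\<kappa> n) n"
      using N_le_M[of "\<kappa> n"] by (intro N) simp
  qed
  ultimately show ?thesis by (rule that)
qed

lemma Limsup_diagonal_le:
  fixes F :: "nat \<Rightarrow> nat \<Rightarrow> 'a::{complete_linorder, linorder_topology}"
  assumes \<kappa>: "filterlim \<kappa> at_top sequentially"
    and c: "antimono c" "c \<longlonglongrightarrow> K"
    and F: "eventually (\<lambda>n. F (\<kappa> n) n \<le> c (\<kappa> n)) sequentially"
  shows "limsup (\<lambda>n. F (\<kappa> n) n) \<le> K"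
proof -
  have "limsup (\<lambda>n. F (\<kappa> n) n) \<le> c j" for j
  proof (rule Limsup_bounded)
    show "eventually (\<lambda>n. F (\<kappa> n) n \<le> c j) sequentially"
      using F \<kappa>[unfolded filterlim_at_top, rule_format, of j]
      by eventually_elim (meson antimonoD c(1) order_trans)
  qed
  then show ?thesis
    using c(2) by (intro tendsto_lowerbound[of c]) (auto intro: always_eventually)
qed

lemma tendsto_zero_if_Limsup_le_zero_ennreal:
  fixes f :: "nat \<Rightarrow> ennreal"
  assumes "limsup f \<le> 0"
  shows "f \<longlonglongrightarrow> 0"
proof (rule Liminf_eq_Limsup)
  show "limsup f = 0" using assms by simp
  then show "liminf f = 0"
    using Liminf_le_Limsup[of sequentially f] by simp
qed simp

lemma antimono_inverse_Suc_ennreal: "antimono (\<lambda>k. ennreal (1 / real (Suc k)))"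
  by (intro antimonoI ennreal_leI) (simp add: frac_le)

lemma inverse_Suc_ennreal_tendsto_zero: "(\<lambda>k. ennreal (1 / real (Suc k))) \<longlonglongrightarrow> 0"
proof -
  have "(\<lambda>k. 1 / real (Suc k)) \<longlonglongrightarrow> 0"
    using LIMSEQ_Suc[OF lim_1_over_n] by simp
  then show ?thesis
    using tendsto_ennrealI by fastforce
qed

lemma adm_seq_zero: "adm_seq \<omega> S h (\<lambda>n x. 0) (\<lambda>n x. 0)"
proof -
  have "scale23 h' 0 = 0" for h'
    unfolding scale23_def by (simp add: vec_eq_iff forall_3 vector_def)
  then show ?thesis
    unfolding adm_seq_def W12_def L2_def by simp
qed

lemma adm_seq_diagonal:
  assumes adm: "\<And>k. adm_seq \<omega> S h (\<psi> k) (D\<psi> k)"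
    and energy: "\<And>k. limsup (\<lambda>n. energy W \<omega> S (h n) m (D\<psi> k n)) < K + ennreal (1 / real (Suc k))"
  obtains \<kappa> :: "nat \<Rightarrow> nat"
    where "adm_seq \<omega> S h (\<lambda>n. \<psi> (\<kappa> n) n) (\<lambda>n. D\<psi> (\<kappa> n) n)"
      and "limsup (\<lambda>n. energy W \<omega> S (h n) m (D\<psi> (\<kappa> n) n)) \<le> K"
proof -
  define \<epsilon> where "\<epsilon> k = ennreal (1 / real (Suc k))" for k
  define a where "a k n = (\<integral>\<^sup>+ x \<in> cyl S \<omega>. ennreal ((norm (scale23 (h n) (\<psi> k n x)))\<^sup>2) \<partial>lebesgue)"
    for k n
  define b where "b k n = (\<integral>\<^sup>+ t \<in> S. ennreal ((integral\<^sup>L (lebesgue_on \<omega>)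
      (\<lambda>y. y $ 2 * \<psi> k n (pt3 t y) $ 2))\<^sup>2) \<partial>lebesgue)" for k n
  define E where "E k n = energy W \<omega> S (h n) m (D\<psi> k n)" for k n
  have "eventually (\<lambda>n. a k n \<le> \<epsilon> k \<and> b k n \<le> \<epsilon> k \<and> E k n \<le> K + \<epsilon> k) sequentially" for k
  proof -
    have "a k \<longlonglongrightarrow> 0" "b k \<longlonglongrightarrow> 0"
      using adm[of k] unfolding adm_seq_def a_def b_def by auto
    moreover have "0 < \<epsilon> k"
      unfolding \<epsilon>_def by simp
    ultimately have "eventually (\<lambda>n. a k n < \<epsilon> k) sequentially"
        "eventually (\<lambda>n. b k n < \<epsilon> k) sequentially"
      by (blast intro: order_tendstoD(2))+
    moreover have "eventually (\<lambda>n. E k n < K + \<epsilon> k) sequentially"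
      using energy[of k, folded E_def \<epsilon>_def] by (rule Limsup_lessD)
    ultimately show ?thesis
      by eventually_elim auto
  qed
  then obtain \<kappa> where
    \<kappa>: "filterlim \<kappa> at_top sequentially" and
    small: "eventually (\<lambda>n. a (\<kappa> n) n \<le> \<epsilon> (\<kappa> n) \<and> b (\<kappa> n) n \<le> \<epsilon> (\<kappa> n) \<and>
                             E (\<kappa> n) n \<le> K + \<epsilon> (\<kappa> n)) sequentially"
    by (rule eventually_diagonal_index)
  have \<epsilon>: "antimono \<epsilon>" "\<epsilon> \<longlonglongrightarrow> 0"
    unfolding \<epsilon>_def using antimono_inverse_Suc_ennreal inverse_Suc_ennreal_tendsto_zero by auto
  have K\<epsilon>: "antimono (\<lambda>k. K + \<epsilon> k)" "(\<lambda>k. K + \<epsilon> k) \<longlonglongrightarrow> K"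
    using \<epsilon> tendsto_add[OF tendsto_const \<epsilon>(2), of K]
    by (auto simp: antimono_def add_left_mono)
  have "(\<lambda>n. a (\<kappa> n) n) \<longlonglongrightarrow> 0" "(\<lambda>n. b (\<kappa> n) n) \<longlonglongrightarrow> 0"
    using small
    by (auto intro!: tendsto_zero_if_Limsup_le_zero_ennreal Limsup_diagonal_le[OF \<kappa> \<epsilon>]
             elim: eventually_mono)
  moreover have "W12 (cyl S \<omega>) (\<psi> (\<kappa> n) n) (D\<psi> (\<kappa> n) n)" for n
    using adm[of "\<kappa> n"] unfolding adm_seq_def by auto
  ultimately have "adm_seq \<omega> S h (\<lambda>n. \<psi> (\<kappa> n) n) (\<lambda>n. D\<psi> (\<kappa> n) n)"
    unfolding adm_seq_def a_def b_def by auto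
  moreover have "limsup (\<lambda>n. E (\<kappa> n) n) \<le> K"
    using small by (intro Limsup_diagonal_le[OF \<kappa> K\<epsilon>]) (auto elim: eventually_mono)
  ultimately show ?thesis
    unfolding E_def by (rule that)
qed

lemma energy_tendsto_Kminus_if_Limsup_le:
  assumes "adm_seq \<omega> S h \<psi> D\<psi>"
    and "limsup (\<lambda>n. energy W \<omega> S (h n) m (D\<psi> n)) \<le> Kminus W \<omega> h m S"
  shows "(\<lambda>n. energy W \<omega> S (h n) m (D\<psi> n)) \<longlonglongrightarrow> Kminus W \<omega> h m S"
proof (rule Liminf_eq_Limsup)
  have "Kminus W \<omega> h m S \<le> liminf (\<lambda>n. energy W \<omega> S (h n) m (D\<psi> n))"
    unfolding Kminus_def using assms(1) by (intro INF_lower2[of "(\<psi>, D\<psi>)"]) auto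
  then show "liminf (\<lambda>n. energy W \<omega> S (h n) m (D\<psi> n)) = Kminus W \<omega> h m S"
    "limsup (\<lambda>n. energy W \<omega> S (h n) m (D\<psi> n)) = Kminus W \<omega> h m S"
    using assms(2) Liminf_le_Limsup[of sequentially] by (auto intro: order.antisym order_trans)
qed simp

lemma recovery_sequence_if_Kplus_eq_Kminus:
  assumes "Kplus W \<omega> h m S = Kminus W \<omega> h m S"
  shows "\<exists>\<theta> D\<theta>. adm_seq \<omega> S h \<theta> D\<theta> \<and>
                 (\<lambda>n. energy W \<omega> S (h n) m (D\<theta> n)) \<longlonglongrightarrow> Kminus W \<omega> h m S"
proof -
  let ?K = "Kminus W \<omega> h m S"
  have "\<exists>\<theta> D\<theta>. adm_seq \<omega> S h \<theta> D\<theta> \<and> limsup (\<lambda>n. energy W \<omega> S (h n) m (D\<theta> n)) \<le> ?K"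
  proof (cases "?K = \<infinity>")
    case True
    then show ?thesis using adm_seq_zero[of \<omega> S h] by auto
  next
    case False
    have "\<exists>p. adm_seq \<omega> S h (fst p) (snd p) \<and>
            limsup (\<lambda>n. energy W \<omega> S (h n) m (snd p n)) < ?K + ennreal (1 / real (Suc k))" for k
    proof -
      have "Kplus W \<omega> h m S < ?K + ennreal (1 / real (Suc k))"
        using assms False by (cases ?K) auto
      then show ?thesis
        unfolding Kplus_def by (auto simp: INF_less_iff)
    qed
    then obtain P where P:
      "\<And>k. adm_seq \<omega> S h (fst (P k)) (snd (P k))"
      "\<And>k. limsup (\<lambda>n. energy W \<omega> S (h n) m (snd (P k) n)) < ?K + ennreal (1 / real (Suc k))"
      using choice[of "\<lambda>k p. adm_seq \<omega> S h (fst p) (snd p) \<and>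
            limsup (\<lambda>n. energy W \<omega> S (h n) m (snd p n)) < ?K + ennreal (1 / real (Suc k))"]
      by blast
    from P obtain \<kappa> where
      "adm_seq \<omega> S h (\<lambda>n. fst (P (\<kappa> n)) n) (\<lambda>n. snd (P (\<kappa> n)) n)"
      "limsup (\<lambda>n. energy W \<omega> S (h n) m (snd (P (\<kappa> n)) n)) \<le> ?K"
      by (rule adm_seq_diagonal)
    then show ?thesis by (intro exI conjI)
  qed
  then obtain \<theta> D\<theta> where
    "adm_seq \<omega> S h \<theta> D\<theta>" "limsup (\<lambda>n. energy W \<omega> S (h n) m (D\<theta> n)) \<le> ?K"
    by blast
  then show ?thesis
    by (intro exI conjI energy_tendsto_Kminus_if_Limsup_le)
qed

lemma dense_family_contains_interval:
  assumes "dense_family L \<D>"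
  shows "{0..L} \<in> \<D>"
proof -
  have "openin (top_of_set {0..L}) {0..L}"
    by (simp add: openin_subtopology_self)
  then obtain D where "D \<in> \<D>" "{0..L} \<subseteq> D" "closure D \<subseteq> {0..L}"
    using assms unfolding dense_family_def
    by (metis closure_closed closed_atLeastAtMost compact_Icc order_refl)
  moreover from this have "D = {0..L}"
    using closure_subset[of D] by blast
  ultimately show ?thesis by simp
qed

theorem lemma2p17:
  fixes L \<eta>1 \<eta>2 \<rho> :: real
    and \<omega> :: "(real^2) set"
    and W :: "real \<Rightarrow> real^3 \<Rightarrow> real^3^3 \<Rightarrow> ennreal"
    and \<D> :: "real set set"
    and h :: "nat \<Rightarrow> real"
  assumes "L > 0"
    and "bounded \<omega>" "open \<omega>" "connected \<omega>" "lipschitz_boundary \<omega>"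
    and "integral\<^sup>L (lebesgue_on \<omega>) (\<lambda>y. y $ 1) = 0"
    and "integral\<^sup>L (lebesgue_on \<omega>) (\<lambda>y. y $ 2) = 0"
    and "integral\<^sup>L (lebesgue_on \<omega>) (\<lambda>y. y $ 1 * y $ 2) = 0"
    and "0 < \<eta>1" "\<eta>1 \<le> \<eta>2" "0 < \<rho>"
    and "admissible_material \<eta>1 \<eta>2 \<rho> (cyl {0..L} \<omega>) W"
    and "dense_family L \<D>"
    and "decseq h" "\<And>n. h n > 0" "h \<longlonglongrightarrow> 0"
    and A: "\<And>m D. L2 (cyl {0..L} \<omega>) m \<Longrightarrow> D \<in> \<D> \<Longrightarrow> Kplus W \<omega> h m D = Kminus W \<omega> h m D"
  shows "\<exists>\<sigma>::nat \<Rightarrow> nat. strict_mono \<sigma> \<and>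
     (\<forall>m. L2 (cyl {0..L} \<omega>) m \<longrightarrow>
        (\<exists>\<theta> D\<theta>. adm_seq \<omega> {0..L} (h \<circ> \<sigma>) \<theta> D\<theta> \<and>
           (\<lambda>n. energy W \<omega> {0..L} ((h \<circ> \<sigma>) n) m (D\<theta> n)) \<longlonglongrightarrow> Kminus W \<omega> h m {0..L}))"
proof (intro exI[of _ id] conjI allI impI)
  show "strict_mono (id :: nat \<Rightarrow> nat)"
    by (simp add: strict_mono_def)
  fix m :: "real^3 \<Rightarrow> real^3" assume "L2 (cyl {0..L} \<omega>) m"
  then have "Kplus W \<omega> h m {0..L} = Kminus W \<omega> h m {0..L}"
    by (rule A[OF _ dense_family_contains_interval[OF \<open>dense_family L \<D>\<close>]])
  from recovery_sequence_if_Kplus_eq_Kminus[OF this]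
  show "\<exists>\<theta> D\<theta>. adm_seq \<omega> {0..L} (h \<circ> id) \<theta> D\<theta> \<and>
          (\<lambda>n. energy W \<omega> {0..L} ((h \<circ> id) n) m (D\<theta> n)) \<longlonglongrightarrow> Kminus W \<omega> h m {0..L}"
    by simp
qed

end
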